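(* For every $v\geq 9$ there exists a connected symmetric configuration $v_3$ which has a blocking set of cardinality $q$ for every integer $q$ with $\lceil v/3\rceil\leq q\leq\lfloor 2v/3\rfloor$.
   Context: A symmetric configuration $v_3$ consists of a set of $v$ points and a collection of $v$ blocks, each block being a 3-element subset of the points, such that every point lies in exactly 3 blocks and any two distinct points lie in at most one common block. It is connected if it is not the union of two configurations on disjoint nonempty point sets (equivalently, its point–block incidence graph is connected). A blocking set is a subset $Q$ of the points such that every block contains at least one point of $Q$ and at least one point not in $Q$. *)

theory Defs
  imports Main
begin

text \<open>Blocks are 3-element subsets of P; since two distinct points lie in at most one
  common block, blocks cannot repeat, so B is a set of blocks.\<close>
definition sym_config3 :: "'a set \<Rightarrow> 'a set set \<Rightarrow> bool" where
  "sym_config3 P B \<longleftrightarrow>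
     finite P \<and> card B = card P \<and>
     (\<forall>b\<in>B. b \<subseteq> P \<and> card b = 3) \<and>
     (\<forall>p\<in>P. card {b\<in>B. p \<in> b} = 3) \<and>
     (\<forall>p\<in>P. \<forall>p'\<in>P. p \<noteq> p' \<longrightarrow> card {b\<in>B. p \<in> b \<and> p' \<in> b} \<le> 1)"

definition config_connected :: "'a set \<Rightarrow> 'a set set \<Rightarrow> bool" where
  "config_connected P B \<longleftrightarrow>
     \<not> (\<exists>P1 P2. P1 \<noteq> {} \<and> P2 \<noteq> {} \<and> P1 \<inter> P2 = {} \<and> P1 \<union> P2 = P \<and>
                (\<forall>b\<in>B. b \<subseteq> P1 \<or> b \<subseteq> P2))"

definition blocking_set :: "'a set \<Rightarrow> 'a set set \<Rightarrow> 'a set \<Rightarrow> bool" where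
  "blocking_set P B Q \<longleftrightarrow> Q \<subseteq> P \<and> (\<forall>b\<in>B. b \<inter> Q \<noteq> {} \<and> b - Q \<noteq> {})"

end

theory Submission
  imports Defs
begin

text \<open>Let \<open>m = \<lceil>v/3\<rceil>\<close> and call \<open>{..<m}\<close> and \<open>{m..<2*m}\<close> the lower and middle layer.
  If every block meets both layers, then the lower layer together with any \<open>q - m\<close> points
  outside the two layers is a blocking set of size \<open>q\<close>; this covers all
  \<open>m \<le> q \<le> v - m = \<lfloor>2v/3\<rfloor>\<close>.

  For \<open>v = 3*m\<close> the cyclic configuration with blocks \<open>{i, m + (i + twist s), 2*m + (i + s)}\<close>
  (\<open>s < 3\<close>, indices mod \<open>m\<close>, \<open>twist\<close> swapping 1 and 2) has this property, and it is
  connected because consecutive lower points are joined through the top layer. For \<open>v = 3*m - 1\<close>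
  and \<open>v = 3*m - 2\<close> delete the top points \<open>3*m - 1\<close> and then \<open>3*m - 2\<close>: the six other points
  on the three blocks through a deleted point are regrouped into two new blocks, chosen so that
  each meets both layers and no surviving block in two points; then degrees and the pair
  condition are preserved.\<close>

section \<open>Connectivity, blocking sets and point deletion\<close>

lemma
  assumes "sym_config3 P B"
  shows sym_config3_finite: "finite P"
    and sym_config3_card_blocks: "card B = card P"
    and sym_config3_block_subset: "b \<in> B \<Longrightarrow> b \<subseteq> P"
    and sym_config3_card_block: "b \<in> B \<Longrightarrow> card b = 3"
    and sym_config3_degree: "x \<in> P \<Longrightarrow> card {b\<in>B. x \<in> b} = 3"
    and sym_config3_pair: "x \<in> P \<Longrightarrow> y \<in> P \<Longrightarrow> x \<noteq> y \<Longrightarrow> card {b\<in>B. x \<in> b \<and> y \<in> b} \<le> 1"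
  using assms unfolding sym_config3_def by auto

lemma sym_config3_finite_blocks:
  assumes "sym_config3 P B" "P \<noteq> {}"
  shows "finite B"
  using assms card_ge_0_finite sym_config3_card_blocks sym_config3_finite by fastforce

lemma sym_config3_covers:
  assumes "sym_config3 P B" "x \<in> P"
  shows "\<exists>b\<in>B. x \<in> b"
  using sym_config3_degree[OF assms] by (metis (mono_tags, lifting) card.empty empty_Collect_eq zero_neq_numeral)

definition collinear :: "'a set set \<Rightarrow> 'a \<Rightarrow> 'a \<Rightarrow> bool" where
  "collinear B x y \<longleftrightarrow> (\<exists>b\<in>B. x \<in> b \<and> y \<in> b)"

lemma config_connected_if_reachable:
  assumes "\<forall>x\<in>P. (collinear B)\<^sup>*\<^sup>* a x"
  shows "config_connected P B"
  unfolding config_connected_def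
proof
  assume "\<exists>P1 P2. P1 \<noteq> {} \<and> P2 \<noteq> {} \<and> P1 \<inter> P2 = {} \<and> P1 \<union> P2 = P \<and>
                  (\<forall>b\<in>B. b \<subseteq> P1 \<or> b \<subseteq> P2)"
  then obtain P1 P2 where part: "P1 \<noteq> {}" "P2 \<noteq> {}" "P1 \<inter> P2 = {}" "P1 \<union> P2 = P"
    and split: "\<forall>b\<in>B. b \<subseteq> P1 \<or> b \<subseteq> P2"
    by blast
  have step: "x \<in> P1 \<longleftrightarrow> y \<in> P1" if "collinear B x y" for x y
    using that part(3) split unfolding collinear_def by blast
  have "x \<in> P1 \<longleftrightarrow> a \<in> P1" if "(collinear B)\<^sup>*\<^sup>* a x" for x
    using that by (induction rule: rtranclp_induct) (auto dest: step)
  then show False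
    using assms part by blast
qed

lemma config_connected_via_initial_segment:
  fixes B :: "nat set set"
  assumes covered: "\<forall>x\<in>P. \<exists>b\<in>B. x \<in> b"
    and meets: "\<forall>b\<in>B. b \<inter> {..<m} \<noteq> {}"
    and chain: "\<And>i. Suc i < m \<Longrightarrow> \<exists>z. collinear B i z \<and> collinear B z (Suc i)"
  shows "config_connected P B"
proof (rule config_connected_if_reachable[where a = 0], rule ballI)
  have initial: "(collinear B)\<^sup>*\<^sup>* 0 i" if "i < m" for i
    using that
  proof (induction i)
    case (Suc i)
    then obtain z where "collinear B i z" "collinear B z (Suc i)"
      using chain by blast
    with Suc show ?case
      by (meson Suc_lessD rtranclp.rtrancl_into_rtrancl)
  qed simp
  fix x assume "x \<in> P"
  then obtain b y where "b \<in> B" "x \<in> b" "y \<in> b" "y < m"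
    using covered meets by blast
  then have "collinear B y x"
    unfolding collinear_def by blast
  with initial[OF \<open>y < m\<close>] show "(collinear B)\<^sup>*\<^sup>* 0 x" ..
qed

definition meets_two_layers :: "nat \<Rightarrow> nat set set \<Rightarrow> bool" where
  "meets_two_layers m B \<longleftrightarrow> (\<forall>b\<in>B. b \<inter> {..<m} \<noteq> {} \<and> b \<inter> {m..<2*m} \<noteq> {})"

lemma blocking_set_of_card:
  assumes "meets_two_layers m B" "m \<le> q" "q + m \<le> v"
  shows "\<exists>Q. blocking_set {..<v} B Q \<and> card Q = q"
proof (intro exI conjI)
  let ?Q = "{..<m} \<union> {2*m..<q+m}"
  show "card ?Q = q"
    using assms(2) by (subst card_Un_disjoint) auto
  show "blocking_set {..<v} B ?Q"
    using assms unfolding blocking_set_def meets_two_layers_def by fastforce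
qed

context
  fixes P :: "'a set" and B :: "'a set set" and p :: 'a and N1 N2 :: "'a set"
  assumes config: "sym_config3 P B" and p: "p \<in> P"
    and disjoint: "N1 \<inter> N2 = {}"
    and neighbours: "N1 \<union> N2 = \<Union>{b\<in>B. p \<in> b} - {p}"
    and fresh: "N1 \<notin> B" "N2 \<notin> B"
begin

private lemma finite_blocks: "finite B"
  using config p sym_config3_finite_blocks by blast

lemma card_blocks_through_after_deletion:
  assumes x: "x \<in> P - {p}"
  shows "card {b\<in>{b\<in>B. p \<notin> b} \<union> {N1, N2}. x \<in> b} = 3"
proof -
  define k where "k = card {b\<in>B. x \<in> b \<and> p \<in> b}"
  have fin: "finite {b\<in>B. x \<in> b \<and> p \<in> b}"
    using finite_blocks by simp
  have "k \<le> 1"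
    using sym_config3_pair[OF config, of x p] x p unfolding k_def by auto
  have new: "card {b\<in>{N1, N2}. x \<in> b} = k"
  proof (cases "x \<in> N1 \<union> N2")
    case True
    then have "{b\<in>B. x \<in> b \<and> p \<in> b} \<noteq> {}"
      using neighbours by auto
    with fin have "k \<noteq> 0"
      unfolding k_def by simp
    with \<open>k \<le> 1\<close> have "k = 1"
      by simp
    moreover have "{b\<in>{N1, N2}. x \<in> b} = (if x \<in> N1 then {N1} else {N2})"
      using True disjoint by auto
    ultimately show ?thesis
      by simp
  next
    case False
    then have "{b\<in>B. x \<in> b \<and> p \<in> b} = {}"
      using neighbours x by auto
    moreover have "{b\<in>{N1, N2}. x \<in> b} = {}"
      using False by auto
    ultimately show ?thesis
      unfolding k_def by (metis card.empty)
  qed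
  have "{b\<in>B. x \<in> b} = {b\<in>B. x \<in> b \<and> p \<notin> b} \<union> {b\<in>B. x \<in> b \<and> p \<in> b}"
    by auto
  then have "card {b\<in>B. x \<in> b \<and> p \<notin> b} + k = 3"
    using sym_config3_degree[OF config, of x] x finite_blocks unfolding k_def
    by (simp add: card_Un_disjoint disjoint_iff)
  moreover have "{b\<in>{b\<in>B. p \<notin> b} \<union> {N1, N2}. x \<in> b} =
      {b\<in>B. x \<in> b \<and> p \<notin> b} \<union> {b\<in>{N1, N2}. x \<in> b}"
    by auto
  moreover have "{b\<in>B. x \<in> b \<and> p \<notin> b} \<inter> {b\<in>{N1, N2}. x \<in> b} = {}"
    using fresh by auto
  ultimately show ?thesis
    using new finite_blocks by (simp add: card_Un_disjoint)
qed

lemma card_blocks_through_pair_after_deletion: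
  assumes x: "x \<in> P - {p}" and y: "y \<in> P - {p}" and "x \<noteq> y"
    and separated: "\<forall>b\<in>B. p \<notin> b \<longrightarrow> (\<forall>N\<in>{N1, N2}. \<forall>u\<in>b \<inter> N. \<forall>w\<in>b \<inter> N. u = w)"
  shows "card {b\<in>{b\<in>B. p \<notin> b} \<union> {N1, N2}. x \<in> b \<and> y \<in> b} \<le> 1"
proof -
  have "card {b\<in>B. x \<in> b \<and> y \<in> b} \<le> 1"
    using sym_config3_pair[OF config, of x y] x y \<open>x \<noteq> y\<close> by blast
  then have old: "a = c" if "a \<in> {b\<in>B. x \<in> b \<and> y \<in> b}" "c \<in> {b\<in>B. x \<in> b \<and> y \<in> b}" for a c
    using that finite_blocks card_le_Suc0_iff_eq[of "{b\<in>B. x \<in> b \<and> y \<in> b}"] by auto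
  have mixed: False if "c \<in> B" "p \<notin> c" "N \<in> {N1, N2}" "x \<in> c \<inter> N" "y \<in> c \<inter> N" for c N
    using separated that \<open>x \<noteq> y\<close> by blast
  have new: "a = c" if "a \<in> {N1, N2}" "c \<in> {N1, N2}" "x \<in> a" "x \<in> c" for a c
    using that disjoint by auto
  have fin: "finite {b\<in>{b\<in>B. p \<notin> b} \<union> {N1, N2}. x \<in> b \<and> y \<in> b}"
    using finite_blocks by simp
  have "a = c"
    if "a \<in> {b\<in>{b\<in>B. p \<notin> b} \<union> {N1, N2}. x \<in> b \<and> y \<in> b}"
      and "c \<in> {b\<in>{b\<in>B. p \<notin> b} \<union> {N1, N2}. x \<in> b \<and> y \<in> b}" for a c
    using that old[of a c] new[of a c] mixed[of a c] mixed[of c a] by auto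
  then show ?thesis
    unfolding One_nat_def card_le_Suc0_iff_eq[OF fin] by blast
qed

lemma sym_config3_delete_point:
  assumes triples: "card N1 = 3" "card N2 = 3"
    and separated: "\<forall>b\<in>B. p \<notin> b \<longrightarrow> (\<forall>N\<in>{N1, N2}. \<forall>u\<in>b \<inter> N. \<forall>w\<in>b \<inter> N. u = w)"
  shows "sym_config3 (P - {p}) ({b\<in>B. p \<notin> b} \<union> {N1, N2})"
proof -
  have "B = {b\<in>B. p \<notin> b} \<union> {b\<in>B. p \<in> b}"
    by auto
  then have "card {b\<in>B. p \<notin> b} + 3 = card B"
    using sym_config3_degree[OF config p] finite_blocks
    by (metis (no_types, lifting) card_Un_disjoint disjoint_iff finite_Un mem_Collect_eq)
  moreover have "N1 \<noteq> N2"
    using disjoint triples by auto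
  ultimately have "card ({b\<in>B. p \<notin> b} \<union> {N1, N2}) = card (P - {p})"
    using sym_config3_card_blocks[OF config] sym_config3_finite[OF config] p fresh finite_blocks
    by (simp add: card_insert_if)
  moreover have "N1 \<union> N2 \<subseteq> P - {p}"
    using sym_config3_block_subset[OF config] neighbours by auto
  then have "\<forall>b\<in>{b\<in>B. p \<notin> b} \<union> {N1, N2}. b \<subseteq> P - {p} \<and> card b = 3"
    using sym_config3_block_subset[OF config] sym_config3_card_block[OF config] triples by auto
  ultimately show ?thesis
    unfolding sym_config3_def
    using sym_config3_finite[OF config] card_blocks_through_after_deletion
      card_blocks_through_pair_after_deletion[OF _ _ _ separated]
    by (intro conjI ballI impI) (simp_all, blast+)
qed

end

section \<open>The cyclic configuration on \<open>3*m\<close> points\<close>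

text \<open>\<open>wrap m x = x mod m\<close> for \<open>x < 2*m\<close>; the case split keeps all goals in linear arithmetic.\<close>
definition wrap :: "nat \<Rightarrow> nat \<Rightarrow> nat" where
  "wrap m x = (if x < m then x else x - m)"

definition twist :: "nat \<Rightarrow> nat" where
  "twist s = (if s = 0 then 0 else if s = 1 then 2 else 1)"

definition cyc_block :: "nat \<Rightarrow> nat \<Rightarrow> nat \<Rightarrow> nat set" where
  "cyc_block m i s = {i, m + wrap m (i + twist s), 2*m + wrap m (i + s)}"

definition cyclic_config :: "nat \<Rightarrow> nat set set" where
  "cyclic_config m = (\<lambda>(i, s). cyc_block m i s) ` ({..<m} \<times> {..<3})"

definition block_index :: "nat \<Rightarrow> nat \<Rightarrow> nat \<Rightarrow> nat" where
  "block_index m x s =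
     (if x < m then x else if x < 2*m then wrap m (x - twist s) else wrap m (x - m - s))"

lemma less_3_cases: "(s::nat) < 3 \<longleftrightarrow> s = 0 \<or> s = 1 \<or> s = 2"
  by auto

lemma wrap_less: "x < 2*m \<Longrightarrow> wrap m x < m"
  by (auto simp: wrap_def)

lemma twist_le: "twist s \<le> 2"
  by (auto simp: twist_def)

lemma cyc_block_in_cyclic_config: "i < m \<Longrightarrow> s < 3 \<Longrightarrow> cyc_block m i s \<in> cyclic_config m"
  unfolding cyclic_config_def by auto

lemma cyc_block_lower: "x \<in> cyc_block m i s \<Longrightarrow> x < m \<Longrightarrow> x = i"
  unfolding cyc_block_def by auto

lemma cyc_block_middle:
  "3 \<le> m \<Longrightarrow> i < m \<Longrightarrow> s < 3 \<Longrightarrow> x \<in> cyc_block m i s \<Longrightarrow> m \<le> x \<Longrightarrow> x < 2*m \<Longrightarrow>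
     x = m + wrap m (i + twist s)"
  using wrap_less[of "i + s" m] unfolding cyc_block_def by auto

lemma cyc_block_top:
  "3 \<le> m \<Longrightarrow> i < m \<Longrightarrow> s < 3 \<Longrightarrow> x \<in> cyc_block m i s \<Longrightarrow> 2*m \<le> x \<Longrightarrow>
     x = 2*m + wrap m (i + s)"
  using wrap_less[of "i + twist s" m] twist_le[of s] unfolding cyc_block_def by auto

lemma cyc_block_subset: "3 \<le> m \<Longrightarrow> i < m \<Longrightarrow> s < 3 \<Longrightarrow> cyc_block m i s \<subseteq> {..<3*m}"
  unfolding less_3_cases by (auto simp: cyc_block_def wrap_def twist_def)

lemma card_cyc_block: "3 \<le> m \<Longrightarrow> i < m \<Longrightarrow> s < 3 \<Longrightarrow> card (cyc_block m i s) = 3"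
  unfolding less_3_cases by (auto simp: cyc_block_def wrap_def twist_def)

lemma mem_cyc_block_iff:
  "3 \<le> m \<Longrightarrow> i < m \<Longrightarrow> s < 3 \<Longrightarrow> x < 3*m \<Longrightarrow> x \<in> cyc_block m i s \<longleftrightarrow> i = block_index m x s"
  unfolding less_3_cases by (auto simp: cyc_block_def block_index_def wrap_def twist_def)

lemma block_index_less: "3 \<le> m \<Longrightarrow> s < 3 \<Longrightarrow> x < 3*m \<Longrightarrow> block_index m x s < m"
  unfolding less_3_cases by (auto simp: block_index_def wrap_def twist_def)

text \<open>For \<open>m \<ge> 3\<close> the offsets \<open>twist s\<close>, \<open>s\<close> and \<open>s - twist s\<close> (\<open>s < 3\<close>) are each
  pairwise distinct modulo \<open>m\<close>, so any two of the three points of a block determine it.\<close>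

lemma cyc_lower_middle_determine:
  "3 \<le> m \<Longrightarrow> i < m \<Longrightarrow> s < 3 \<Longrightarrow> s' < 3 \<Longrightarrow>
   wrap m (i + twist s) = wrap m (i + twist s') \<Longrightarrow> s = s'"
  unfolding less_3_cases wrap_def twist_def by (elim disjE; simp split: if_splits; linarith)

lemma cyc_lower_top_determine:
  "3 \<le> m \<Longrightarrow> i < m \<Longrightarrow> s < 3 \<Longrightarrow> s' < 3 \<Longrightarrow> wrap m (i + s) = wrap m (i + s') \<Longrightarrow> s = s'"
  unfolding less_3_cases wrap_def by (elim disjE; simp split: if_splits; linarith)

lemma cyc_middle_top_determine:
  "3 \<le> m \<Longrightarrow> i < m \<Longrightarrow> s < 3 \<Longrightarrow> i' < m \<Longrightarrow> s' < 3 \<Longrightarrow>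
   wrap m (i + twist s) = wrap m (i' + twist s') \<Longrightarrow> wrap m (i + s) = wrap m (i' + s') \<Longrightarrow>
   i = i' \<and> s = s'"
  unfolding less_3_cases wrap_def twist_def by (elim disjE; simp split: if_splits; linarith)

lemma cyc_block_common_point:
  assumes "3 \<le> m" "i < m" "s < 3" "i' < m" "s' < 3"
    and "x \<in> cyc_block m i s" "x \<in> cyc_block m i' s'"
  shows "(x = i \<and> x = i') \<or>
    (x = m + wrap m (i + twist s) \<and> wrap m (i + twist s) = wrap m (i' + twist s')) \<or>
    (x = 2*m + wrap m (i + s) \<and> wrap m (i + s) = wrap m (i' + s'))"
proof -
  consider "x < m" | "m \<le> x" "x < 2*m" | "2*m \<le> x"
    by linarith
  then show ?thesis
  proof cases
    case 1
    then show ?thesis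
      using assms(6,7) cyc_block_lower by blast
  next
    case 2
    then show ?thesis
      using cyc_block_middle[OF assms(1-3,6)] cyc_block_middle[OF assms(1,4,5,7)] by simp
  next
    case 3
    then show ?thesis
      using cyc_block_top[OF assms(1-3,6)] cyc_block_top[OF assms(1,4,5,7)] by simp
  qed
qed

lemma cyc_block_eq_iff:
  assumes "3 \<le> m" "i < m" "s < 3" "i' < m" "s' < 3"
  shows "cyc_block m i s = cyc_block m i' s' \<longleftrightarrow> i = i' \<and> s = s'"
proof
  assume eq: "cyc_block m i s = cyc_block m i' s'"
  have lower: "i \<in> cyc_block m i' s'" and top: "2*m + wrap m (i + s) \<in> cyc_block m i' s'"
    using eq unfolding cyc_block_def by blast+
  have "i = i'"
    using cyc_block_lower[OF lower] assms(2) by simp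
  moreover have "wrap m (i + s) = wrap m (i' + s')"
    using cyc_block_top[OF assms(1,4,5) top] by simp
  ultimately show "i = i' \<and> s = s'"
    using cyc_lower_top_determine assms by blast
qed simp

lemma cyc_block_pair_unique:
  assumes "3 \<le> m" "i < m" "s < 3" "i' < m" "s' < 3" "x \<noteq> y"
    and "x \<in> cyc_block m i s" "y \<in> cyc_block m i s" "x \<in> cyc_block m i' s'" "y \<in> cyc_block m i' s'"
  shows "i = i' \<and> s = s'"
  using cyc_block_common_point[OF assms(1-5,7,9)] cyc_block_common_point[OF assms(1-5,8,10)]
  by (elim disjE)
    (use assms(6) cyc_lower_middle_determine[OF assms(1-3,5)] cyc_lower_top_determine[OF assms(1-3,5)]
       cyc_middle_top_determine[OF assms(1-5)] in auto)

lemma cyc_blocks_through: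
  assumes "3 \<le> m" "x < 3*m"
  shows "{b \<in> cyclic_config m. x \<in> b} = (\<lambda>s. cyc_block m (block_index m x s) s) ` {..<3}"
proof (intro equalityI subsetI)
  fix b assume "b \<in> {b \<in> cyclic_config m. x \<in> b}"
  then obtain i s where "i < m" "s < 3" "b = cyc_block m i s" "x \<in> b"
    unfolding cyclic_config_def by auto
  then show "b \<in> (\<lambda>s. cyc_block m (block_index m x s) s) ` {..<3}"
    using mem_cyc_block_iff[OF assms(1) _ _ assms(2)] by auto
next
  fix b assume "b \<in> (\<lambda>s. cyc_block m (block_index m x s) s) ` {..<3}"
  then obtain s where "s < 3" "b = cyc_block m (block_index m x s) s"
    by auto
  then show "b \<in> {b \<in> cyclic_config m. x \<in> b}"
    using mem_cyc_block_iff[OF assms(1) _ _ assms(2)] block_index_less[OF assms(1) _ assms(2)]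
    unfolding cyclic_config_def by auto
qed

lemma sym_config3_cyclic:
  assumes "3 \<le> m"
  shows "sym_config3 {..<3*m} (cyclic_config m)"
proof -
  have "inj_on (\<lambda>(i, s). cyc_block m i s) ({..<m} \<times> {..<3})"
    using cyc_block_eq_iff[OF assms] by (auto simp: inj_on_def)
  then have "card (cyclic_config m) = card {..<3*m}"
    unfolding cyclic_config_def by (simp add: card_image)
  moreover have "card {b \<in> cyclic_config m. x \<in> b} = 3" if "x < 3*m" for x
  proof -
    have "inj_on (\<lambda>s. cyc_block m (block_index m x s) s) {..<3}"
      using cyc_block_eq_iff[OF assms] block_index_less[OF assms _ that] by (auto simp: inj_on_def)
    then show ?thesis
      using cyc_blocks_through[OF assms that] by (simp add: card_image)
  qed
  moreover have "card {b \<in> cyclic_config m. x \<in> b \<and> y \<in> b} \<le> 1" if "x \<noteq> y" for x y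
  proof -
    have "finite (cyclic_config m)"
      unfolding cyclic_config_def by simp
    moreover have "a = c" if "a \<in> cyclic_config m" "c \<in> cyclic_config m"
      "x \<in> a" "y \<in> a" "x \<in> c" "y \<in> c" for a c
      using that cyc_block_pair_unique[OF assms _ _ _ _ \<open>x \<noteq> y\<close>] unfolding cyclic_config_def by blast
    ultimately show ?thesis
      by (simp add: card_le_Suc0_iff_eq)
  qed
  ultimately show ?thesis
    using cyc_block_subset[OF assms] card_cyc_block[OF assms]
    unfolding sym_config3_def cyclic_config_def by auto
qed

lemma meets_two_layers_cyclic:
  assumes "3 \<le> m"
  shows "meets_two_layers m (cyclic_config m)"
proof -
  have "m + wrap m (i + twist s) \<in> {m..<2*m}" if "i < m" for i s
    using that wrap_less[of "i + twist s" m] twist_le[of s] assms by auto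
  then show ?thesis
    unfolding meets_two_layers_def cyclic_config_def cyc_block_def by auto
qed

lemma collinear_through_top:
  assumes "Suc i < m" "cyc_block m i 1 \<in> B" "cyc_block m (Suc i) 0 \<in> B"
  shows "collinear B i (2*m + Suc i)" "collinear B (2*m + Suc i) (Suc i)"
proof -
  have "i \<in> cyc_block m i 1" "2*m + Suc i \<in> cyc_block m i 1"
    "2*m + Suc i \<in> cyc_block m (Suc i) 0" "Suc i \<in> cyc_block m (Suc i) 0"
    using assms(1) unfolding cyc_block_def wrap_def twist_def by auto
  then show "collinear B i (2*m + Suc i)" "collinear B (2*m + Suc i) (Suc i)"
    using assms(2,3) unfolding collinear_def by blast+
qed

lemma config_connected_cyclic:
  assumes "3 \<le> m"
  shows "config_connected {..<3*m} (cyclic_config m)"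
proof (rule config_connected_via_initial_segment)
  show "\<forall>x\<in>{..<3*m}. \<exists>b\<in>cyclic_config m. x \<in> b"
    using sym_config3_covers[OF sym_config3_cyclic[OF assms]] by blast
  show "\<forall>b\<in>cyclic_config m. b \<inter> {..<m} \<noteq> {}"
    using meets_two_layers_cyclic[OF assms] unfolding meets_two_layers_def by blast
  fix i assume "Suc i < m"
  moreover have "cyc_block m i 1 \<in> cyclic_config m" "cyc_block m (Suc i) 0 \<in> cyclic_config m"
    using \<open>Suc i < m\<close> by (auto intro: cyc_block_in_cyclic_config)
  ultimately show "\<exists>z. collinear (cyclic_config m) i z \<and> collinear (cyclic_config m) z (Suc i)"
    using collinear_through_top by blast
qed

section \<open>Deleting one or two top points\<close>

lemma not_cyclic_block_two_lower:
  assumes "a \<in> N" "b \<in> N" "a \<noteq> b" "a < m" "b < m"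
  shows "N \<notin> cyclic_config m"
proof
  assume "N \<in> cyclic_config m"
  then obtain i s where "N = cyc_block m i s"
    unfolding cyclic_config_def by auto
  then show False
    using assms cyc_block_lower by metis
qed

lemma not_cyclic_block_two_middle:
  assumes "3 \<le> m" "a \<in> N" "b \<in> N" "a \<noteq> b" "m \<le> a" "a < 2*m" "m \<le> b" "b < 2*m"
  shows "N \<notin> cyclic_config m"
proof
  assume "N \<in> cyclic_config m"
  then obtain i s where "i < m" "s < 3" "N = cyc_block m i s"
    unfolding cyclic_config_def by auto
  then show False
    using assms cyc_block_middle[OF assms(1)] by metis
qed

text \<open>With \<open>m = k + 4\<close> the blocks through the deleted point \<open>3*k+11 = 3*m - 1\<close> are
  \<open>{k+3, 2*k+7, 3*k+11}\<close>, \<open>{k+2, k+4, 3*k+11}\<close> and \<open>{k+1, 2*k+6, 3*k+11}\<close>.\<close>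
definition del1_block1 :: "nat \<Rightarrow> nat set" where
  "del1_block1 k = {k+3, 2*k+7, 2*k+6}"

definition del1_block2 :: "nat \<Rightarrow> nat set" where
  "del1_block2 k = {k+2, k+1, k+4}"

definition cyclic_config_del1 :: "nat \<Rightarrow> nat set set" where
  "cyclic_config_del1 k = {b \<in> cyclic_config (k+4). 3*k+11 \<notin> b} \<union> {del1_block1 k, del1_block2 k}"

lemma blocks_through_last_point:
  "{b \<in> cyclic_config (k+4). 3*k+11 \<in> b} =
     {cyc_block (k+4) (k+3) 0, cyc_block (k+4) (k+2) 1, cyc_block (k+4) (k+1) 2}"
proof -
  have "block_index (k+4) (3*k+11) s = k + 3 - s" if "s < 3" for s
    using that by (auto simp: block_index_def wrap_def)
  moreover have "{..<3::nat} = {0, 1, 2}"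
    by auto
  ultimately show ?thesis
    using cyc_blocks_through[of "k+4" "3*k+11"] by auto
qed

lemma neighbours_last_point:
  "\<Union>{b \<in> cyclic_config (k+4). 3*k+11 \<in> b} - {3*k+11} = del1_block1 k \<union> del1_block2 k"
  unfolding blocks_through_last_point
  by (auto simp: cyc_block_def wrap_def twist_def del1_block1_def del1_block2_def)

lemma cyc_block_meets_del1_block1_once:
  "i < k+4 \<Longrightarrow> s < 3 \<Longrightarrow> 3*k+11 \<notin> cyc_block (k+4) i s \<Longrightarrow>
   u \<in> cyc_block (k+4) i s \<inter> del1_block1 k \<Longrightarrow> w \<in> cyc_block (k+4) i s \<inter> del1_block1 k \<Longrightarrow> u = w"
  unfolding less_3_cases cyc_block_def del1_block1_def wrap_def twist_def
  by (elim disjE; simp split: if_splits; linarith)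

lemma cyc_block_meets_del1_block2_once:
  "i < k+4 \<Longrightarrow> s < 3 \<Longrightarrow> 3*k+11 \<notin> cyc_block (k+4) i s \<Longrightarrow>
   u \<in> cyc_block (k+4) i s \<inter> del1_block2 k \<Longrightarrow> w \<in> cyc_block (k+4) i s \<inter> del1_block2 k \<Longrightarrow> u = w"
  unfolding less_3_cases cyc_block_def del1_block2_def wrap_def twist_def
  by (elim disjE; simp split: if_splits; linarith)

lemma del1_separated:
  "\<forall>b\<in>cyclic_config (k+4). 3*k+11 \<notin> b \<longrightarrow>
     (\<forall>N\<in>{del1_block1 k, del1_block2 k}. \<forall>u\<in>b \<inter> N. \<forall>w\<in>b \<inter> N. u = w)"
  unfolding cyclic_config_def
  using cyc_block_meets_del1_block1_once cyc_block_meets_del1_block2_once by fastforce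

lemma sym_config3_del1: "sym_config3 {..<3*k+11} (cyclic_config_del1 k)"
proof -
  have "sym_config3 ({..<3*(k+4)} - {3*k+11}) (cyclic_config_del1 k)"
    unfolding cyclic_config_del1_def
  proof (rule sym_config3_delete_point)
    show "sym_config3 {..<3*(k+4)} (cyclic_config (k+4))"
      by (rule sym_config3_cyclic) simp
    show "del1_block1 k \<union> del1_block2 k = \<Union>{b \<in> cyclic_config (k+4). 3*k+11 \<in> b} - {3*k+11}"
      by (rule neighbours_last_point[symmetric])
    show "del1_block1 k \<notin> cyclic_config (k+4)"
      by (rule not_cyclic_block_two_middle[of _ "2*k+7" _ "2*k+6"]) (auto simp: del1_block1_def)
    show "del1_block2 k \<notin> cyclic_config (k+4)"
      by (rule not_cyclic_block_two_lower[of "k+2" _ "k+1"]) (auto simp: del1_block2_def)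
  qed (auto simp: del1_block1_def del1_block2_def del1_separated)
  moreover have "{..<3*(k+4)} - {3*k+11} = {..<3*k+11}"
    by auto
  ultimately show ?thesis
    by simp
qed

definition del2_block1 :: "nat \<Rightarrow> nat set" where
  "del2_block1 k = {k+1, k, 2*k+7}"

definition del2_block2 :: "nat \<Rightarrow> nat set" where
  "del2_block2 k = {k+2, 2*k+6, 2*k+5}"

definition cyclic_config_del2 :: "nat \<Rightarrow> nat set set" where
  "cyclic_config_del2 k =
     {b \<in> cyclic_config_del1 k. 3*k+10 \<notin> b} \<union> {del2_block1 k, del2_block2 k}"

lemma blocks_through_second_last_point:
  "{b \<in> cyclic_config_del1 k. 3*k+10 \<in> b} =
     {cyc_block (k+4) (k+2) 0, cyc_block (k+4) (k+1) 1, cyc_block (k+4) k 2}"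
proof -
  have "3*k+11 \<notin> b" if b: "b \<in> cyclic_config (k+4)" "3*k+10 \<in> b" for b
  proof -
    obtain i s where block: "i < k+4" "s < 3" "b = cyc_block (k+4) i s"
      using b(1) unfolding cyclic_config_def by auto
    have top: "x = 2*(k+4) + wrap (k+4) (i + s)" if "x \<in> b" "2*(k+4) \<le> x" for x
      using cyc_block_top[of "k+4" i s x] block that by simp
    have "3*k+10 = 2*(k+4) + wrap (k+4) (i + s)"
      using top b(2) by simp
    then show ?thesis
      using top[of "3*k+11"] by auto
  qed
  then have "{b \<in> cyclic_config_del1 k. 3*k+10 \<in> b} = {b \<in> cyclic_config (k+4). 3*k+10 \<in> b}"
    unfolding cyclic_config_del1_def by (auto simp: del1_block1_def del1_block2_def)
  moreover have "block_index (k+4) (3*k+10) s = k + 2 - s" if "s < 3" for s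
    using that by (auto simp: block_index_def wrap_def)
  moreover have "{..<3::nat} = {0, 1, 2}"
    by auto
  ultimately show ?thesis
    using cyc_blocks_through[of "k+4" "3*k+10"] by auto
qed

lemma neighbours_second_last_point:
  "\<Union>{b \<in> cyclic_config_del1 k. 3*k+10 \<in> b} - {3*k+10} = del2_block1 k \<union> del2_block2 k"
  unfolding blocks_through_second_last_point
  by (auto simp: cyc_block_def wrap_def twist_def del2_block1_def del2_block2_def)

lemma cyc_block_meets_del2_block1_once:
  "i < k+4 \<Longrightarrow> s < 3 \<Longrightarrow> 3*k+10 \<notin> cyc_block (k+4) i s \<Longrightarrow>
   u \<in> cyc_block (k+4) i s \<inter> del2_block1 k \<Longrightarrow> w \<in> cyc_block (k+4) i s \<inter> del2_block1 k \<Longrightarrow> u = w"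
  unfolding less_3_cases cyc_block_def del2_block1_def wrap_def twist_def
  by (elim disjE; simp split: if_splits; linarith)

lemma cyc_block_meets_del2_block2_once:
  "i < k+4 \<Longrightarrow> s < 3 \<Longrightarrow> 3*k+10 \<notin> cyc_block (k+4) i s \<Longrightarrow>
   u \<in> cyc_block (k+4) i s \<inter> del2_block2 k \<Longrightarrow> w \<in> cyc_block (k+4) i s \<inter> del2_block2 k \<Longrightarrow> u = w"
  unfolding less_3_cases cyc_block_def del2_block2_def wrap_def twist_def
  by (elim disjE; simp split: if_splits; linarith)

lemma del2_separated:
  "\<forall>b\<in>cyclic_config_del1 k. 3*k+10 \<notin> b \<longrightarrow>
     (\<forall>N\<in>{del2_block1 k, del2_block2 k}. \<forall>u\<in>b \<inter> N. \<forall>w\<in>b \<inter> N. u = w)"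
proof -
  have intersections: "del1_block1 k \<inter> del2_block1 k = {2*k+7}" "del1_block1 k \<inter> del2_block2 k = {2*k+6}"
    "del1_block2 k \<inter> del2_block1 k = {k+1}" "del1_block2 k \<inter> del2_block2 k = {k+2}"
    unfolding del1_block1_def del1_block2_def del2_block1_def del2_block2_def by auto
  show ?thesis
  proof (intro ballI impI)
    fix b N u w assume b: "b \<in> cyclic_config_del1 k" "3*k+10 \<notin> b"
      and N: "N \<in> {del2_block1 k, del2_block2 k}" and uw: "u \<in> b \<inter> N" "w \<in> b \<inter> N"
    show "u = w"
    proof (cases "b \<in> cyclic_config (k+4)")
      case True
      then obtain i s where "i < k+4" "s < 3" "b = cyc_block (k+4) i s"
        unfolding cyclic_config_def by auto
      then show ?thesis
        using N b(2) uw cyc_block_meets_del2_block1_once cyc_block_meets_del2_block2_once by blast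
    next
      case False
      then have "b = del1_block1 k \<or> b = del1_block2 k"
        using b(1) unfolding cyclic_config_del1_def by auto
      then obtain c where "b \<inter> N = {c}"
        using N intersections by auto
      then show ?thesis
        using uw by simp
    qed
  qed
qed

lemma sym_config3_del2: "sym_config3 {..<3*k+10} (cyclic_config_del2 k)"
proof -
  have "sym_config3 ({..<3*k+11} - {3*k+10}) (cyclic_config_del2 k)"
    unfolding cyclic_config_del2_def
  proof (rule sym_config3_delete_point)
    show "sym_config3 {..<3*k+11} (cyclic_config_del1 k)"
      by (rule sym_config3_del1)
    show "del2_block1 k \<union> del2_block2 k = \<Union>{b \<in> cyclic_config_del1 k. 3*k+10 \<in> b} - {3*k+10}"
      by (rule neighbours_second_last_point[symmetric])
    have "del2_block1 k \<notin> cyclic_config (k+4)"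
      by (rule not_cyclic_block_two_lower[of "k+1" _ k]) (auto simp: del2_block1_def)
    moreover have "k \<in> del2_block1 k" "k \<notin> del1_block1 k" "k \<notin> del1_block2 k"
      by (auto simp: del1_block1_def del1_block2_def del2_block1_def)
    ultimately show "del2_block1 k \<notin> cyclic_config_del1 k"
      unfolding cyclic_config_del1_def by auto
    have "del2_block2 k \<notin> cyclic_config (k+4)"
      by (rule not_cyclic_block_two_middle[of _ "2*k+6" _ "2*k+5"]) (auto simp: del2_block2_def)
    moreover have "2*k+5 \<in> del2_block2 k" "2*k+5 \<notin> del1_block1 k" "2*k+5 \<notin> del1_block2 k"
      by (auto simp: del1_block1_def del1_block2_def del2_block2_def)
    ultimately show "del2_block2 k \<notin> cyclic_config_del1 k"
      unfolding cyclic_config_del1_def by auto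
  qed (auto simp: del2_block1_def del2_block2_def del2_separated)
  moreover have "{..<3*k+11} - {3*k+10} = {..<3*k+10}"
    by auto
  ultimately show ?thesis
    by simp
qed

lemma meets_two_layers_del1: "meets_two_layers (k+4) (cyclic_config_del1 k)"
  using meets_two_layers_cyclic[of "k+4"]
  unfolding meets_two_layers_def cyclic_config_del1_def del1_block1_def del1_block2_def by auto

lemma meets_two_layers_del2: "meets_two_layers (k+4) (cyclic_config_del2 k)"
  using meets_two_layers_del1[of k]
  unfolding meets_two_layers_def cyclic_config_del2_def del2_block1_def del2_block2_def by auto

text \<open>The links used for the cyclic configuration survive the deletions up to \<open>i = k\<close>; the last
  two steps go through the new block \<open>{k+1, k+2, k+4}\<close> and the cyclic block \<open>{k+3, k+4, 2*k+9}\<close>.\<close>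
lemma lower_points_linked_after_deletion:
  assumes cyclic: "\<And>b. b \<in> cyclic_config (k+4) \<Longrightarrow> 3*k+10 \<notin> b \<Longrightarrow> 3*k+11 \<notin> b \<Longrightarrow> b \<in> B"
    and new: "del1_block2 k \<in> B" and "Suc i < k+4"
  shows "\<exists>z. collinear B i z \<and> collinear B z (Suc i)"
proof -
  consider "i \<le> k" | "i = k+1" | "i = k+2"
    using \<open>Suc i < k+4\<close> by linarith
  then show ?thesis
  proof cases
    case 1
    have "p \<notin> cyc_block (k+4) i 1" "p \<notin> cyc_block (k+4) (Suc i) 0" if "p \<in> {3*k+10, 3*k+11}" for p
      using that 1 by (auto simp: cyc_block_def wrap_def twist_def)
    then have "cyc_block (k+4) i 1 \<in> B" "cyc_block (k+4) (Suc i) 0 \<in> B"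
      using 1 by (auto intro!: cyclic cyc_block_in_cyclic_config)
    then show ?thesis
      using collinear_through_top \<open>Suc i < k+4\<close> by blast
  next
    case 2
    then show ?thesis
      using new unfolding collinear_def del1_block2_def by (intro exI[of _ "k+2"]) auto
  next
    case 3
    have "cyc_block (k+4) (k+3) 2 = {k+3, k+4, 2*k+9}"
      by (auto simp: cyc_block_def wrap_def twist_def)
    then have "cyc_block (k+4) (k+3) 2 \<in> B"
      using cyclic[of "cyc_block (k+4) (k+3) 2"] cyc_block_in_cyclic_config[of "k+3" "k+4" 2] by auto
    then have "collinear B (k+4) (k+3)"
      using \<open>cyc_block (k+4) (k+3) 2 = {k+3, k+4, 2*k+9}\<close> unfolding collinear_def by auto
    moreover have "collinear B (k+2) (k+4)"
      using new unfolding collinear_def del1_block2_def by auto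
    ultimately show ?thesis
      using 3 by (intro exI[of _ "k+4"]) (simp add: numeral_eq_Suc)
  qed
qed

lemma config_connected_del1: "config_connected {..<3*k+11} (cyclic_config_del1 k)"
proof (rule config_connected_via_initial_segment)
  show "\<forall>x\<in>{..<3*k+11}. \<exists>b\<in>cyclic_config_del1 k. x \<in> b"
    using sym_config3_covers[OF sym_config3_del1] by blast
  show "\<forall>b\<in>cyclic_config_del1 k. b \<inter> {..<k+4} \<noteq> {}"
    using meets_two_layers_del1 unfolding meets_two_layers_def by blast
  show "\<exists>z. collinear (cyclic_config_del1 k) i z \<and> collinear (cyclic_config_del1 k) z (Suc i)"
    if "Suc i < k+4" for i
    by (rule lower_points_linked_after_deletion[OF _ _ that]) (auto simp: cyclic_config_del1_def)
qed

lemma config_connected_del2: "config_connected {..<3*k+10} (cyclic_config_del2 k)"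
proof (rule config_connected_via_initial_segment)
  show "\<forall>x\<in>{..<3*k+10}. \<exists>b\<in>cyclic_config_del2 k. x \<in> b"
    using sym_config3_covers[OF sym_config3_del2] by blast
  show "\<forall>b\<in>cyclic_config_del2 k. b \<inter> {..<k+4} \<noteq> {}"
    using meets_two_layers_del2 unfolding meets_two_layers_def by blast
  show "\<exists>z. collinear (cyclic_config_del2 k) i z \<and> collinear (cyclic_config_del2 k) z (Suc i)"
    if "Suc i < k+4" for i
  proof (rule lower_points_linked_after_deletion[OF _ _ that])
    show "del1_block2 k \<in> cyclic_config_del2 k"
      by (auto simp: cyclic_config_del2_def cyclic_config_del1_def del1_block2_def)
  qed (auto simp: cyclic_config_del2_def cyclic_config_del1_def)
qed

lemma exists_layered_config:
  assumes "9 \<le> v"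
  shows "\<exists>B. sym_config3 {..<v} B \<and> config_connected {..<v} B \<and> meets_two_layers ((v+2) div 3) B"
proof -
  have "v mod 3 = 0 \<or> v mod 3 = 2 \<or> v mod 3 = 1"
    by presburger
  then show ?thesis
  proof (elim disjE)
    assume "v mod 3 = 0"
    define m where "m = v div 3"
    have "v = 3*m" "3 \<le> m" "(v+2) div 3 = m"
      using \<open>v mod 3 = 0\<close> assms unfolding m_def by presburger+
    then show ?thesis
      using sym_config3_cyclic[of m] config_connected_cyclic[of m] meets_two_layers_cyclic[of m]
      by metis
  next
    assume "v mod 3 = 2"
    define k where "k = (v - 11) div 3"
    have "v = 3*k+11" "(v+2) div 3 = k+4"
      using \<open>v mod 3 = 2\<close> assms unfolding k_def by presburger+
    then show ?thesis
      using sym_config3_del1[of k] config_connected_del1[of k] meets_two_layers_del1[of k]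
      by metis
  next
    assume "v mod 3 = 1"
    define k where "k = (v - 10) div 3"
    have "v = 3*k+10" "(v+2) div 3 = k+4"
      using \<open>v mod 3 = 1\<close> assms unfolding k_def by presburger+
    then show ?thesis
      using sym_config3_del2[of k] config_connected_del2[of k] meets_two_layers_del2[of k]
      by metis
  qed
qed

theorem mainTheorem2:
  fixes v :: nat
  assumes "v \<ge> 9"
  shows "\<exists>B :: nat set set.
           sym_config3 {..<v} B \<and> config_connected {..<v} B \<and>
           (\<forall>q::nat. (v + 2) div 3 \<le> q \<and> q \<le> (2 * v) div 3 \<longrightarrow>
              (\<exists>Q. blocking_set {..<v} B Q \<and> card Q = q))"
proof -
  obtain B where config: "sym_config3 {..<v} B" "config_connected {..<v} B"
    and layers: "meets_two_layers ((v+2) div 3) B"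
    using exists_layered_config[OF assms] by blast
  have "(v+2) div 3 + (2*v) div 3 = v"
    by presburger
  then have "\<exists>Q. blocking_set {..<v} B Q \<and> card Q = q"
    if "(v+2) div 3 \<le> q \<and> q \<le> (2*v) div 3" for q
    using that by (intro blocking_set_of_card[OF layers]) linarith+
  with config show ?thesis
    by blast
qed

end
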